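(* Let $G$ be the fundamental solution of the wave or heat equation and $T>0$. For any $\alpha\in(-1,1)$ and any $h\in\mathbb{R}$, $$\int_0^T\int_{\mathbb{R}}(1-\cos(\xi h))|\mathcal{F}G_t(\xi)|^2|\xi|^{\alpha}d\xi\,dt\le\begin{cases}CT|h|^{1-\alpha}&\text{wave equation},\\ C|h|^{1-\alpha}&\text{heat equation},\end{cases}$$ where $C=\int_{\mathbb{R}}(1-\cos\eta)|\eta|^{\alpha-2}d\eta$.
   Context: Wave: $\mathcal{F}G_t(\xi)=\sin(t|\xi|)/|\xi|$. Heat: $\mathcal{F}G_t(\xi)=e^{-t|\xi|^2/2}$. *)

theory Defs
  imports "HOL-Analysis.Analysis"
begin

definition FG_wave :: "real \<Rightarrow> real \<Rightarrow> real" where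
  "FG_wave t \<xi> = sin (t * \<bar>\<xi>\<bar>) / \<bar>\<xi>\<bar>"

definition FG_heat :: "real \<Rightarrow> real \<Rightarrow> real" where
  "FG_heat t \<xi> = exp (- t * \<xi>\<^sup>2 / 2)"

definition incr_integral :: "(real \<Rightarrow> real \<Rightarrow> real) \<Rightarrow> real \<Rightarrow> real \<Rightarrow> real \<Rightarrow> ennreal" where
  "incr_integral FG T \<alpha> h =
     (\<integral>\<^sup>+ t\<in>{0..T}. (\<integral>\<^sup>+ \<xi>. ennreal ((1 - cos (\<xi> * h)) * \<bar>FG t \<xi>\<bar>\<^sup>2 * \<bar>\<xi>\<bar> powr \<alpha>) \<partial>lborel) \<partial>lborel)"

definition C_const :: "real \<Rightarrow> ennreal" where
  "C_const \<alpha> = (\<integral>\<^sup>+ \<eta>. ennreal ((1 - cos \<eta>) * \<bar>\<eta>\<bar> powr (\<alpha> - 2)) \<partial>lborel)"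

end

theory Submission
  imports Defs
begin

text \<open>By Tonelli it suffices to bound, for each frequency \<open>\<xi>\<close>, the time integral
  \<open>\<integral>\<^sub>0\<^sup>T |FG t \<xi>|\<^sup>2 |\<xi>| powr \<alpha> dt\<close> by \<open>K |\<xi>| powr (\<alpha> - 2)\<close>: for the wave equation
  \<open>sin\<^sup>2 \<le> 1\<close> gives \<open>K = T\<close>, for the heat equation \<open>\<integral>\<^sub>0\<^sup>T exp (- t \<xi>\<^sup>2) dt \<le> 1 / \<xi>\<^sup>2\<close>
  gives \<open>K = 1\<close>. The remaining integral \<open>\<integral> (1 - cos (\<xi> h)) |\<xi>| powr (\<alpha> - 2) d\<xi>\<close> becomes
  \<open>C |h| powr (1 - \<alpha>)\<close> under the substitution \<open>\<eta> = \<xi> h\<close>.\<close>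

definition cos_increment_integral :: "real \<Rightarrow> real \<Rightarrow> ennreal" where
  "cos_increment_integral \<alpha> h =
     (\<integral>\<^sup>+ \<xi>. ennreal ((1 - cos (\<xi> * h)) * \<bar>\<xi>\<bar> powr (\<alpha> - 2)) \<partial>lborel)"

lemma C_const_eq_scaled:
  fixes h \<alpha> :: real
  assumes h: "h \<noteq> 0"
  shows "C_const \<alpha> = ennreal (\<bar>h\<bar> powr (\<alpha> - 1)) * cos_increment_integral \<alpha> h"
proof -
  have "C_const \<alpha> = ennreal \<bar>h\<bar> *
      (\<integral>\<^sup>+ \<xi>. ennreal ((1 - cos (0 + h * \<xi>)) * \<bar>0 + h * \<xi>\<bar> powr (\<alpha> - 2)) \<partial>lborel)"
    unfolding C_const_def by (rule nn_integral_real_affine[OF _ h]) measurable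
  also have "(\<integral>\<^sup>+ \<xi>. ennreal ((1 - cos (0 + h * \<xi>)) * \<bar>0 + h * \<xi>\<bar> powr (\<alpha> - 2)) \<partial>lborel)
      = (\<integral>\<^sup>+ \<xi>. ennreal (\<bar>h\<bar> powr (\<alpha> - 2)) *
           ennreal ((1 - cos (\<xi> * h)) * \<bar>\<xi>\<bar> powr (\<alpha> - 2)) \<partial>lborel)"
    by (intro nn_integral_cong)
       (simp add: ennreal_mult'[symmetric] abs_mult powr_mult mult.commute mult.left_commute)
  also have "\<dots> = ennreal (\<bar>h\<bar> powr (\<alpha> - 2)) * cos_increment_integral \<alpha> h"
    unfolding cos_increment_integral_def by (rule nn_integral_cmult) measurable
  also have "ennreal \<bar>h\<bar> * (ennreal (\<bar>h\<bar> powr (\<alpha> - 2)) * cos_increment_integral \<alpha> h)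
      = ennreal (\<bar>h\<bar> * \<bar>h\<bar> powr (\<alpha> - 2)) * cos_increment_integral \<alpha> h"
    by (simp add: ennreal_mult' mult.assoc)
  also have "\<bar>h\<bar> * \<bar>h\<bar> powr (\<alpha> - 2) = \<bar>h\<bar> powr (\<alpha> - 1)"
    using h by (simp add: powr_add[symmetric] powr_mult_base)
  finally show ?thesis .
qed

lemma cos_increment_integral_eq:
  "cos_increment_integral \<alpha> h = C_const \<alpha> * ennreal (\<bar>h\<bar> powr (1 - \<alpha>))"
proof (cases "h = 0")
  case False
  have "\<bar>h\<bar> powr (\<alpha> - 1) * \<bar>h\<bar> powr (1 - \<alpha>) = 1"
    using False by (simp add: powr_add[symmetric])
  then show ?thesis
    unfolding C_const_eq_scaled[OF False]
    by (simp add: mult.commute mult.left_commute ennreal_mult'[symmetric])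
qed (simp add: cos_increment_integral_def)

lemma incr_integral_le_of_time_bound:
  fixes T \<alpha> h :: real and K :: ennreal
  assumes meas: "case_prod FG \<in> borel_measurable (lborel \<Otimes>\<^sub>M lborel)"
    and bound: "\<And>\<xi>. (\<integral>\<^sup>+ t\<in>{0..T}. ennreal (\<bar>FG t \<xi>\<bar>\<^sup>2 * \<bar>\<xi>\<bar> powr \<alpha>) \<partial>lborel)
                     \<le> K * ennreal (\<bar>\<xi>\<bar> powr (\<alpha> - 2))"
  shows "incr_integral FG T \<alpha> h \<le> K * cos_increment_integral \<alpha> h"
proof -
  let ?f = "\<lambda>t \<xi>. ennreal ((1 - cos (\<xi> * h)) * \<bar>FG t \<xi>\<bar>\<^sup>2 * \<bar>\<xi>\<bar> powr \<alpha>) * indicator {0..T} t"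
  have "incr_integral FG T \<alpha> h = (\<integral>\<^sup>+ t. \<integral>\<^sup>+ \<xi>. ?f t \<xi> \<partial>lborel \<partial>lborel)"
    unfolding incr_integral_def
    by (intro nn_integral_cong nn_integral_multc[symmetric])
       (use meas in \<open>measurable\<close>)
  also have "\<dots> = (\<integral>\<^sup>+ \<xi>. \<integral>\<^sup>+ t. ?f t \<xi> \<partial>lborel \<partial>lborel)"
    by (rule lborel_pair.Fubini') (use meas in \<open>measurable\<close>)
  also have "\<dots> \<le> (\<integral>\<^sup>+ \<xi>. K * ennreal ((1 - cos (\<xi> * h)) * \<bar>\<xi>\<bar> powr (\<alpha> - 2)) \<partial>lborel)"
  proof (rule nn_integral_mono)
    fix \<xi> :: real
    have "(\<integral>\<^sup>+ t. ?f t \<xi> \<partial>lborel)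
        = ennreal (1 - cos (\<xi> * h)) *
          (\<integral>\<^sup>+ t\<in>{0..T}. ennreal (\<bar>FG t \<xi>\<bar>\<^sup>2 * \<bar>\<xi>\<bar> powr \<alpha>) \<partial>lborel)"
      by (subst nn_integral_cmult[symmetric])
         (use meas in \<open>measurable\<close>, auto intro!: nn_integral_cong simp: ennreal_mult' mult.assoc)
    also have "\<dots> \<le> ennreal (1 - cos (\<xi> * h)) * (K * ennreal (\<bar>\<xi>\<bar> powr (\<alpha> - 2)))"
      by (intro mult_left_mono bound) simp
    finally show "(\<integral>\<^sup>+ t. ?f t \<xi> \<partial>lborel)
        \<le> K * ennreal ((1 - cos (\<xi> * h)) * \<bar>\<xi>\<bar> powr (\<alpha> - 2))"
      by (simp add: ennreal_mult' mult_ac)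
  qed
  also have "\<dots> = K * cos_increment_integral \<alpha> h"
    unfolding cos_increment_integral_def by (rule nn_integral_cmult) measurable
  finally show ?thesis .
qed

lemma FG_wave_sq_weight_le: "\<bar>FG_wave t \<xi>\<bar>\<^sup>2 * \<bar>\<xi>\<bar> powr \<alpha> \<le> \<bar>\<xi>\<bar> powr (\<alpha> - 2)"
proof (cases "\<xi> = 0")
  case False
  have "\<bar>FG_wave t \<xi>\<bar>\<^sup>2 * \<bar>\<xi>\<bar> powr \<alpha> = (sin (t * \<bar>\<xi>\<bar>))\<^sup>2 * (\<bar>\<xi>\<bar> powr \<alpha> / \<xi>\<^sup>2)"
    using False by (simp add: FG_wave_def power_divide)
  also have "\<dots> \<le> 1 * (\<bar>\<xi>\<bar> powr \<alpha> / \<xi>\<^sup>2)"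
    by (intro mult_right_mono) (auto simp: abs_square_le_1)
  also have "\<dots> = \<bar>\<xi>\<bar> powr (\<alpha> - 2)"
    using False by (simp add: powr_diff)
  finally show ?thesis .
qed (simp add: FG_wave_def)

lemma FG_wave_time_integral_le:
  assumes "0 \<le> T"
  shows "(\<integral>\<^sup>+ t\<in>{0..T}. ennreal (\<bar>FG_wave t \<xi>\<bar>\<^sup>2 * \<bar>\<xi>\<bar> powr \<alpha>) \<partial>lborel)
           \<le> ennreal T * ennreal (\<bar>\<xi>\<bar> powr (\<alpha> - 2))"
proof -
  have "(\<integral>\<^sup>+ t\<in>{0..T}. ennreal (\<bar>FG_wave t \<xi>\<bar>\<^sup>2 * \<bar>\<xi>\<bar> powr \<alpha>) \<partial>lborel)
      \<le> (\<integral>\<^sup>+ t. ennreal (\<bar>\<xi>\<bar> powr (\<alpha> - 2)) * indicator {0..T} t \<partial>lborel)"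
    by (intro nn_integral_mono mult_right_mono ennreal_leI FG_wave_sq_weight_le) simp
  also have "\<dots> = ennreal (\<bar>\<xi>\<bar> powr (\<alpha> - 2)) * ennreal T"
    using assms by (subst nn_integral_cmult_indicator) auto
  finally show ?thesis by (simp add: mult.commute)
qed

lemma nn_integral_exp_neg_mult_interval:
  fixes T c :: real
  assumes T: "0 \<le> T" and c: "c \<noteq> 0"
  shows "(\<integral>\<^sup>+ t\<in>{0..T}. ennreal (exp (- t * c)) \<partial>lborel) = ennreal ((1 - exp (- T * c)) / c)"
proof -
  have "((\<lambda>t. exp (- t * c)) has_integral (- exp (- T * c) / c - - exp (- 0 * c) / c)) {0..T}"
  proof (rule fundamental_theorem_of_calculus[OF T])
    fix t assume "t \<in> {0..T}"
    have "((\<lambda>t. - exp (- t * c) / c) has_real_derivative exp (- t * c)) (at t within {0..T})"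
      using c by (auto intro!: derivative_eq_intros)
    then show "((\<lambda>t. - exp (- t * c) / c) has_vector_derivative exp (- t * c)) (at t within {0..T})"
      by (simp add: has_real_derivative_iff_has_vector_derivative)
  qed
  then have "((\<lambda>t. exp (- t * c)) has_integral ((1 - exp (- T * c)) / c)) {0..T}"
    by (simp add: diff_divide_distrib)
  from nn_integral_has_integral_lebesgue'[OF _ this] show ?thesis
    by simp
qed

lemma FG_heat_time_integral_le:
  assumes "0 \<le> T"
  shows "(\<integral>\<^sup>+ t\<in>{0..T}. ennreal (\<bar>FG_heat t \<xi>\<bar>\<^sup>2 * \<bar>\<xi>\<bar> powr \<alpha>) \<partial>lborel)
           \<le> 1 * ennreal (\<bar>\<xi>\<bar> powr (\<alpha> - 2))"
proof (cases "\<xi> = 0")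
  case False
  have sq: "\<bar>FG_heat t \<xi>\<bar>\<^sup>2 = exp (- t * \<xi>\<^sup>2)" for t
    by (simp add: FG_heat_def power2_eq_square exp_add[symmetric])
  have weight: "\<bar>\<xi>\<bar> powr \<alpha> = \<xi>\<^sup>2 * \<bar>\<xi>\<bar> powr (\<alpha> - 2)"
    using False by (simp add: powr_diff)
  have "(\<integral>\<^sup>+ t\<in>{0..T}. ennreal (\<bar>FG_heat t \<xi>\<bar>\<^sup>2 * \<bar>\<xi>\<bar> powr \<alpha>) \<partial>lborel)
      = ennreal (\<xi>\<^sup>2 * \<bar>\<xi>\<bar> powr (\<alpha> - 2)) *
        (\<integral>\<^sup>+ t\<in>{0..T}. ennreal (exp (- t * \<xi>\<^sup>2)) \<partial>lborel)"
    unfolding sq weight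
    by (subst nn_integral_cmult[symmetric])
       (measurable, auto intro!: nn_integral_cong simp: ennreal_mult'[symmetric] mult_ac)
  also have "\<dots> = ennreal (\<xi>\<^sup>2 * \<bar>\<xi>\<bar> powr (\<alpha> - 2)) * ennreal ((1 - exp (- T * \<xi>\<^sup>2)) / \<xi>\<^sup>2)"
    using False by (subst nn_integral_exp_neg_mult_interval[OF assms]) simp_all
  also have "\<dots> = ennreal (\<bar>\<xi>\<bar> powr (\<alpha> - 2) * (1 - exp (- T * \<xi>\<^sup>2)))"
    using False by (simp add: ennreal_mult'[symmetric])
  also have "\<dots> \<le> 1 * ennreal (\<bar>\<xi>\<bar> powr (\<alpha> - 2))"
    by (simp add: ennreal_leI mult_left_le)
  finally show ?thesis .
qed (simp add: FG_heat_def)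

theorem lemma3p4:
  fixes T \<alpha> h :: real
  assumes "T > 0" and "-1 < \<alpha>" and "\<alpha> < 1"
  shows "incr_integral FG_wave T \<alpha> h \<le> C_const \<alpha> * ennreal (T * \<bar>h\<bar> powr (1 - \<alpha>)) \<and>
         incr_integral FG_heat T \<alpha> h \<le> C_const \<alpha> * ennreal (\<bar>h\<bar> powr (1 - \<alpha>))"
proof
  \<comment> \<open>The bounds on \<open>\<alpha>\<close> only make \<open>C_const \<alpha>\<close> finite; the inequalities hold in \<open>ennreal\<close> regardless.\<close>
  have T: "0 \<le> T" using assms(1) by simp
  have "incr_integral FG_wave T \<alpha> h \<le> ennreal T * cos_increment_integral \<alpha> h"
    by (rule incr_integral_le_of_time_bound[OF _ FG_wave_time_integral_le[OF T]])
       (unfold FG_wave_def case_prod_unfold, measurable)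
  then show "incr_integral FG_wave T \<alpha> h \<le> C_const \<alpha> * ennreal (T * \<bar>h\<bar> powr (1 - \<alpha>))"
    using T by (simp add: cos_increment_integral_eq ennreal_mult' mult_ac)
  have "incr_integral FG_heat T \<alpha> h \<le> 1 * cos_increment_integral \<alpha> h"
    by (rule incr_integral_le_of_time_bound[OF _ FG_heat_time_integral_le[OF T]])
       (unfold FG_heat_def case_prod_unfold, measurable)
  then show "incr_integral FG_heat T \<alpha> h \<le> C_const \<alpha> * ennreal (\<bar>h\<bar> powr (1 - \<alpha>))"
    by (simp add: cos_increment_integral_eq)
qed

end
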